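(* Let $\mathcal P$ be the set of STL formulae, let $\mathcal T$ be a trajectory space which is bounded in the supremum norm, let $I\subset\mathbb R_{\ge 0}$ be a bounded interval, and let $\mu_0$ be a probability measure on $\mathcal T$. Define $k':\mathcal P\times\mathcal P\to\mathbb R$ by $$k'(\varphi,\psi)=\int_{\xi\in\mathcal T}\int_{t\in I}\rho(\varphi,\xi,t)\,\rho(\psi,\xi,t)\,dt\,d\mu_0(\xi).$$ Then $k'$ is a proper kernel function: there exist a Hilbert space $\mathbb H$ and a map $\Phi:\mathcal P\to\mathbb H$ such that $k'(\varphi,\psi)=\langle\Phi(\varphi),\Phi(\psi)\rangle_{\mathbb H}$ for all $\varphi,\psi\in\mathcal P$.
   Context: Trajectories are continuous functions $\xi:\mathbb R_{\ge0}\to\mathbb R^n$ (for a fixed $n$). The trajectory space $\mathcal T$ is a set of such functions, and it is bounded in the supremum norm: there is $B\in\mathbb R$ with $\sup_t\|\xi(t)\|\le B$ for all $\xi\in\mathcal T$. The probability measure $\mu_0$ is defined on a $\sigma$-algebra on $\mathcal T$ for which $(\xi,t)\mapsto\rho(\varphi,\xi,t)$ is measurable for every formula $\varphi$. STL formulae are generated by $\varphi ::= tt \mid \pi \mid \neg\varphi \mid \varphi_1\wedge\varphi_2 \mid \varphi_1\,\mathbf U_{[a,b]}\,\varphi_2$ with $a<b$ rationals, where an atomic predicate $\pi$ has the form $f_\pi(x_1,\dots,x_n)\ge 0$ for a continuous function $f_\pi:\mathbb R^n\to\mathbb R$. The robustness $\rho(\varphi,\xi,t)$ is defined recursively: $\rho(\pi,\xi,t)=f_\pi(\xi(t))$;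 $\rho(\neg\varphi,\xi,t)=-\rho(\varphi,\xi,t)$; $\rho(\varphi_1\wedge\varphi_2,\xi,t)=\min(\rho(\varphi_1,\xi,t),\rho(\varphi_2,\xi,t))$; $\rho(\varphi_1\mathbf U_{[a,b]}\varphi_2,\xi,t)=\max_{t'\in[a+t,b+t]}\min\big(\rho(\varphi_2,\xi,t'),\min_{t''\in[t,t']}\rho(\varphi_1,\xi,t'')\big)$ (the robustness of $tt$ is a fixed positive constant). *)

theory Defs
  imports "HOL-Probability.Probability"
begin

text \<open>STL formulae over trajectories in R^n (n given by the finite index type 'n).
  Atomic predicate Atom f stands for f(x) >= 0.\<close>
datatype 'n stl =
    TT
  | Atom "real^'n \<Rightarrow> real"
  | Neg "'n stl"
  | And "'n stl" "'n stl"
  | Until rat rat "'n stl" "'n stl"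

fun wf_stl :: "('n::finite) stl \<Rightarrow> bool" where
  "wf_stl TT = True"
| "wf_stl (Atom f) = continuous_on UNIV f"
| "wf_stl (Neg \<phi>) = wf_stl \<phi>"
| "wf_stl (And \<phi> \<psi>) = (wf_stl \<phi> \<and> wf_stl \<psi>)"
| "wf_stl (Until a b \<phi> \<psi>) = (0 \<le> a \<and> a < b \<and> wf_stl \<phi> \<and> wf_stl \<psi>)"

text \<open>Quantitative robustness; c is the fixed positive robustness of tt.
  max/min over compact intervals are written as SUP/INF.\<close>
primrec rho :: "real \<Rightarrow> ('n::finite) stl \<Rightarrow> (real \<Rightarrow> real^'n) \<Rightarrow> real \<Rightarrow> real" where
  "rho c TT \<xi> t = c"
| "rho c (Atom f) \<xi> t = f (\<xi> t)"
| "rho c (Neg \<phi>) \<xi> t = - rho c \<phi> \<xi> t"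
| "rho c (And \<phi> \<psi>) \<xi> t = min (rho c \<phi> \<xi> t) (rho c \<psi> \<xi> t)"
| "rho c (Until a b \<phi> \<psi>) \<xi> t =
     (SUP t'\<in>{real_of_rat a + t .. real_of_rat b + t}.
        min (rho c \<psi> \<xi> t') (INF t''\<in>{t..t'}. rho c \<phi> \<xi> t''))"

definition stl_kernel ::
  "real \<Rightarrow> real set \<Rightarrow> (real \<Rightarrow> real^('n::finite)) measure \<Rightarrow> 'n stl \<Rightarrow> 'n stl \<Rightarrow> real" where
  "stl_kernel c I \<mu>0 \<phi> \<psi> =
     integral\<^sup>L \<mu>0 (\<lambda>\<xi>. set_lebesgue_integral lborel I (\<lambda>t. rho c \<phi> \<xi> t * rho c \<psi> \<xi> t))"

text \<open>A real Hilbert space whose vectors are real-valued functions on 'a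
  (vector operations pointwise), given by a carrier H and an inner product ip:
  H is a linear subspace, ip is a symmetric, bilinear, positive definite form on H,
  and H is complete for the norm induced by ip.\<close>
definition hilbert_space_on :: "('a \<Rightarrow> real) set \<Rightarrow> (('a \<Rightarrow> real) \<Rightarrow> ('a \<Rightarrow> real) \<Rightarrow> real) \<Rightarrow> bool" where
  "hilbert_space_on H ip \<longleftrightarrow>
     (\<lambda>_. 0) \<in> H \<and>
     (\<forall>x\<in>H. \<forall>y\<in>H. (\<lambda>i. x i + y i) \<in> H) \<and>
     (\<forall>r::real. \<forall>x\<in>H. (\<lambda>i. r * x i) \<in> H) \<and>
     (\<forall>x\<in>H. \<forall>y\<in>H. ip x y = ip y x) \<and>
     (\<forall>x\<in>H. \<forall>y\<in>H. \<forall>z\<in>H. ip (\<lambda>i. x i + y i) z = ip x z + ip y z) \<and>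
     (\<forall>r::real. \<forall>x\<in>H. \<forall>y\<in>H. ip (\<lambda>i. r * x i) y = r * ip x y) \<and>
     (\<forall>x\<in>H. 0 \<le> ip x x \<and> (ip x x = 0 \<longrightarrow> x = (\<lambda>_. 0))) \<and>
     (\<forall>X::nat \<Rightarrow> ('a \<Rightarrow> real).
        (\<forall>n. X n \<in> H) \<and>
        (\<forall>e>0. \<exists>N. \<forall>m\<ge>N. \<forall>n\<ge>N. sqrt (ip (\<lambda>i. X m i - X n i) (\<lambda>i. X m i - X n i)) < e)
        \<longrightarrow> (\<exists>L\<in>H. (\<lambda>n. sqrt (ip (\<lambda>i. X n i - L i) (\<lambda>i. X n i - L i))) \<longlonglongrightarrow> 0))"

end

theory Submission
  imports Defs "HOL-Library.Function_Algebras"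
begin

(* For a well-formed formula phi the robustness rho(phi, xi, t) is bounded for xi in T and t >= 0
   (by induction on phi: atoms are continuous on the ball of radius B containing all trajectory
   values, and min, sup and inf preserve bounds), and it is jointly measurable by hypothesis.
   So F_phi(xi, t) = 1_I(t) * rho(phi, xi, t) is bounded with support of finite measure in
   mu0 x Lebesgue, and by Fubini k'(phi, psi) is the integral of F_phi * F_psi. Such a Gram kernel
   is positive semidefinite: sum_ij a_i a_j k'(phi_i, phi_j) is the integral of
   (sum_i a_i F_phi_i)^2.

   A symmetric positive semidefinite kernel K is the inner product of the feature map x |-> K x in
   its reproducing kernel Hilbert space (Moore-Aronszajn). The finite combinations sum_i a_i K x_i
   form a pre-Hilbert space with <K x, K y> = K x y; its completion is realised as the pointwise
   limits of its Cauchy sequences. These limits exist since evaluation at y is bounded by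
   sqrt (K y y) times the norm, and two Cauchy sequences with the same pointwise limit are
   equivalent since pairing with a fixed combination is a finite sum of point evaluations. *)

section \<open>Semi-inner products on spaces of real functions\<close>

lemma discriminant_le_if_quadratic_nonneg:
  fixes a b c :: real
  assumes "0 \<le> c" and nonneg: "\<And>t. 0 \<le> a + 2 * t * b + t\<^sup>2 * c"
  shows "b\<^sup>2 \<le> a * c"
proof (cases "c = 0")
  case True
  have "b = 0"
  proof (rule ccontr)
    assume "b \<noteq> 0"
    then have "a + 2 * (- (a + 1) / (2 * b)) * b = -1" by (simp add: field_simps)
    then show False using nonneg[of "- (a + 1) / (2 * b)"] True by simp
  qed
  then show ?thesis using True by simp
next
  case False
  with \<open>0 \<le> c\<close> have "c > 0" by simp
  have "0 \<le> a + 2 * (- b / c) * b + (- b / c)\<^sup>2 * c" by (rule nonneg)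
  also have "\<dots> = (a * c - b\<^sup>2) / c" using \<open>c > 0\<close> by (simp add: field_simps power2_eq_square)
  finally show ?thesis using \<open>c > 0\<close> by (simp add: zero_le_divide_iff)
qed

definition ip_norm :: "(('a \<Rightarrow> real) \<Rightarrow> ('a \<Rightarrow> real) \<Rightarrow> real) \<Rightarrow> ('a \<Rightarrow> real) \<Rightarrow> real" where
  "ip_norm ip f = sqrt (ip f f)"

definition ip_Cauchy :: "(('a \<Rightarrow> real) \<Rightarrow> ('a \<Rightarrow> real) \<Rightarrow> real) \<Rightarrow> (nat \<Rightarrow> 'a \<Rightarrow> real) \<Rightarrow> bool" where
  "ip_Cauchy ip X \<longleftrightarrow>
     ((\<lambda>(m, n). ip_norm ip (X m - X n)) \<longlongrightarrow> 0) (sequentially \<times>\<^sub>F sequentially)"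

lemma Cauchy_iff_dist_tendsto_0:
  "Cauchy X \<longleftrightarrow> ((\<lambda>(m, n). dist (X m) (X n)) \<longlongrightarrow> 0) (sequentially \<times>\<^sub>F sequentially)"
  unfolding Cauchy_def tendsto_iff eventually_prod_sequentially by (simp add: dist_commute)

locale semi_inner_product_space =
  fixes H :: "('a \<Rightarrow> real) set"
    and ip :: "('a \<Rightarrow> real) \<Rightarrow> ('a \<Rightarrow> real) \<Rightarrow> real"
  assumes zero_mem: "0 \<in> H"
    and add_mem: "f \<in> H \<Longrightarrow> g \<in> H \<Longrightarrow> f + g \<in> H"
    and scale_mem: "f \<in> H \<Longrightarrow> (\<lambda>x. r * f x) \<in> H"
    and ip_sym: "f \<in> H \<Longrightarrow> g \<in> H \<Longrightarrow> ip f g = ip g f"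
    and ip_add_left: "f \<in> H \<Longrightarrow> g \<in> H \<Longrightarrow> h \<in> H \<Longrightarrow> ip (f + g) h = ip f h + ip g h"
    and ip_scale_left: "f \<in> H \<Longrightarrow> g \<in> H \<Longrightarrow> ip (\<lambda>x. r * f x) g = r * ip f g"
    and ip_nonneg: "f \<in> H \<Longrightarrow> 0 \<le> ip f f"
begin

lemma diff_eq_add_scale: "f - g = f + (\<lambda>x. (-1) * g x)" for f g :: "'a \<Rightarrow> real"
  by (simp add: fun_eq_iff)

lemma diff_mem: "f \<in> H \<Longrightarrow> g \<in> H \<Longrightarrow> f - g \<in> H"
  unfolding diff_eq_add_scale by (intro add_mem scale_mem)

lemma ip_add_right: "f \<in> H \<Longrightarrow> g \<in> H \<Longrightarrow> h \<in> H \<Longrightarrow> ip h (f + g) = ip h f + ip h g"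
  using ip_sym[of h "f + g"] ip_sym[of h f] ip_sym[of h g] by (simp add: add_mem ip_add_left)

lemma ip_scale_right: "f \<in> H \<Longrightarrow> g \<in> H \<Longrightarrow> ip g (\<lambda>x. r * f x) = r * ip g f"
  using ip_sym[of g "\<lambda>x. r * f x"] ip_sym[of g f] by (simp add: scale_mem ip_scale_left)

lemma ip_diff_left: "f \<in> H \<Longrightarrow> g \<in> H \<Longrightarrow> h \<in> H \<Longrightarrow> ip (f - g) h = ip f h - ip g h"
  unfolding diff_eq_add_scale
  using ip_add_left[OF _ scale_mem[of g "-1"]] ip_scale_left[of g h "-1"] by simp

lemma ip_diff_right: "f \<in> H \<Longrightarrow> g \<in> H \<Longrightarrow> h \<in> H \<Longrightarrow> ip h (f - g) = ip h f - ip h g"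
  using ip_sym[of h "f - g"] ip_sym[of h f] ip_sym[of h g] by (simp add: diff_mem ip_diff_left)

lemma ip_norm_nonneg: "f \<in> H \<Longrightarrow> 0 \<le> ip_norm ip f"
  by (simp add: ip_norm_def ip_nonneg)

lemma ip_Cauchy_Schwarz: "f \<in> H \<Longrightarrow> g \<in> H \<Longrightarrow> \<bar>ip f g\<bar> \<le> ip_norm ip f * ip_norm ip g"
proof -
  assume f: "f \<in> H" and g: "g \<in> H"
  have "0 \<le> ip f f + 2 * t * ip f g + t\<^sup>2 * ip g g" for t
  proof -
    have "0 \<le> ip (f + (\<lambda>x. t * g x)) (f + (\<lambda>x. t * g x))"
      using f g by (intro ip_nonneg add_mem scale_mem)
    also have "\<dots> = ip f f + 2 * t * ip f g + t\<^sup>2 * ip g g"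
      using f g ip_sym[OF f g]
      by (simp add: ip_add_left ip_add_right add_mem scale_mem ip_scale_left ip_scale_right
          power2_eq_square algebra_simps)
    finally show ?thesis .
  qed
  then have "(ip f g)\<^sup>2 \<le> ip f f * ip g g"
    using ip_nonneg[OF g] by (intro discriminant_le_if_quadratic_nonneg)
  then have "sqrt ((ip f g)\<^sup>2) \<le> sqrt (ip f f * ip g g)"
    by (rule real_sqrt_le_mono)
  then show ?thesis by (simp add: ip_norm_def real_sqrt_mult)
qed

lemma ip_norm_triangle: "f \<in> H \<Longrightarrow> g \<in> H \<Longrightarrow> ip_norm ip (f + g) \<le> ip_norm ip f + ip_norm ip g"
proof -
  assume f: "f \<in> H" and g: "g \<in> H"
  have "ip (f + g) (f + g) = ip f f + 2 * ip f g + ip g g"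
    using f g ip_sym[OF f g] by (simp add: ip_add_left ip_add_right add_mem)
  also have "\<dots> \<le> (ip_norm ip f)\<^sup>2 + 2 * (ip_norm ip f * ip_norm ip g) + (ip_norm ip g)\<^sup>2"
    using ip_Cauchy_Schwarz[OF f g] f g by (simp add: ip_norm_def ip_nonneg)
  also have "\<dots> = (ip_norm ip f + ip_norm ip g)\<^sup>2"
    by (simp add: power2_eq_square algebra_simps)
  finally show ?thesis
    using ip_norm_nonneg[OF f] ip_norm_nonneg[OF g] real_sqrt_le_mono
    by (fastforce simp: ip_norm_def[of ip "f + g"])
qed

lemma ip_norm_diff_triangle:
  "f \<in> H \<Longrightarrow> g \<in> H \<Longrightarrow> h \<in> H \<Longrightarrow> ip_norm ip (f - h) \<le> ip_norm ip (f - g) + ip_norm ip (g - h)"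
  using ip_norm_triangle[of "f - g" "g - h"] by (simp add: diff_mem)

lemma ip_norm_diff_commute: "f \<in> H \<Longrightarrow> g \<in> H \<Longrightarrow> ip_norm ip (f - g) = ip_norm ip (g - f)"
  using ip_sym[of f g] by (simp add: ip_norm_def ip_diff_left ip_diff_right diff_mem)

lemma ip_norm_scale: "f \<in> H \<Longrightarrow> ip_norm ip (\<lambda>x. r * f x) = \<bar>r\<bar> * ip_norm ip f"
proof -
  assume f: "f \<in> H"
  then have "ip (\<lambda>x. r * f x) (\<lambda>x. r * f x) = r\<^sup>2 * ip f f"
    by (simp add: ip_scale_left ip_scale_right scale_mem power2_eq_square)
  then show ?thesis by (simp add: ip_norm_def real_sqrt_mult)
qed

lemma ip_polarization:
  "f \<in> H \<Longrightarrow> g \<in> H \<Longrightarrow> ip f g = (ip (f + g) (f + g) - ip (f - g) (f - g)) / 4"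
  using ip_sym[of f g]
  by (simp add: add_mem diff_mem ip_add_left ip_add_right ip_diff_left ip_diff_right)

lemma ip_norm_reverse_triangle:
  "f \<in> H \<Longrightarrow> g \<in> H \<Longrightarrow> \<bar>ip_norm ip f - ip_norm ip g\<bar> \<le> ip_norm ip (f - g)"
  using ip_norm_triangle[of "f - g" g] ip_norm_triangle[of "g - f" f] ip_norm_diff_commute[of f g]
  by (simp add: diff_mem abs_le_iff)

lemma ip_zero_left: "g \<in> H \<Longrightarrow> ip 0 g = 0"
  using ip_scale_left[OF zero_mem, of g 0] by (simp add: zero_fun_def)

lemma ip_Cauchy_iff:
  assumes "\<And>n. X n \<in> H"
  shows "ip_Cauchy ip X \<longleftrightarrow> (\<forall>e>0. \<exists>N. \<forall>m\<ge>N. \<forall>n\<ge>N. ip_norm ip (X m - X n) < e)"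
  unfolding ip_Cauchy_def tendsto_iff eventually_prod_sequentially
  using assms by (simp add: dist_real_def ip_norm_nonneg diff_mem) blast

lemma ip_Cauchy_add:
  assumes s: "\<And>n. s n \<in> H" and t: "\<And>n. t n \<in> H" and "ip_Cauchy ip s" "ip_Cauchy ip t"
  shows "ip_Cauchy ip (\<lambda>n. s n + t n)"
  unfolding ip_Cauchy_def
proof (rule Lim_null_comparison)
  show "((\<lambda>(m, n). ip_norm ip (s m - s n) + ip_norm ip (t m - t n)) \<longlongrightarrow> 0)
      (sequentially \<times>\<^sub>F sequentially)"
    using tendsto_add[OF assms(3,4)[unfolded ip_Cauchy_def]] by (simp add: split_beta')
  have "ip_norm ip (s m + t m - (s n + t n)) \<le> ip_norm ip (s m - s n) + ip_norm ip (t m - t n)"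
    for m n
  proof -
    have "s m + t m - (s n + t n) = (s m - s n) + (t m - t n)"
      by (simp add: fun_eq_iff)
    then show ?thesis by (simp only:) (intro ip_norm_triangle diff_mem s t)
  qed
  then show "\<forall>\<^sub>F x in sequentially \<times>\<^sub>F sequentially.
      norm ((\<lambda>(m, n). ip_norm ip (s m + t m - (s n + t n))) x)
        \<le> (\<lambda>(m, n). ip_norm ip (s m - s n) + ip_norm ip (t m - t n)) x"
    using s t by (intro always_eventually) (auto simp: ip_norm_nonneg add_mem diff_mem)
qed

lemma ip_Cauchy_scale:
  assumes s: "\<And>n. s n \<in> H" and "ip_Cauchy ip s"
  shows "ip_Cauchy ip (\<lambda>n x. r * s n x)"
proof -
  have "(\<lambda>x. r * s m x) - (\<lambda>x. r * s n x) = (\<lambda>x. r * (s m - s n) x)" for m n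
    by (simp add: fun_eq_iff algebra_simps)
  then have "ip_norm ip ((\<lambda>x. r * s m x) - (\<lambda>x. r * s n x)) = \<bar>r\<bar> * ip_norm ip (s m - s n)"
    for m n
    using ip_norm_scale[OF diff_mem[OF s s]] by presburger
  then show ?thesis
    using tendsto_mult_left[OF assms(2)[unfolded ip_Cauchy_def], of "\<bar>r\<bar>"]
    by (simp add: ip_Cauchy_def split_beta')
qed

lemma ip_Cauchy_diff:
  assumes s: "\<And>n. s n \<in> H" and t: "\<And>n. t n \<in> H" and "ip_Cauchy ip s" "ip_Cauchy ip t"
  shows "ip_Cauchy ip (\<lambda>n. s n - t n)"
proof -
  have "ip_Cauchy ip (\<lambda>n. s n + (\<lambda>x. (-1) * t n x))"
    using s scale_mem[OF t] assms(3) ip_Cauchy_scale[OF t assms(4)] by (rule ip_Cauchy_add)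
  then show ?thesis by (simp only: diff_eq_add_scale)
qed

lemma ip_Cauchy_const: "g \<in> H \<Longrightarrow> ip_Cauchy ip (\<lambda>_. g)"
  by (simp add: ip_Cauchy_def ip_norm_def ip_zero_left zero_mem split_beta')

lemma ip_Cauchy_norm_convergent:
  assumes s: "\<And>n. s n \<in> H" and "ip_Cauchy ip s"
  shows "convergent (\<lambda>n. ip_norm ip (s n))"
proof -
  have "Cauchy (\<lambda>n. ip_norm ip (s n))"
    unfolding Cauchy_iff_dist_tendsto_0
  proof (rule Lim_null_comparison)
    show "\<forall>\<^sub>F x in sequentially \<times>\<^sub>F sequentially.
        norm ((\<lambda>(m, n). dist (ip_norm ip (s m)) (ip_norm ip (s n))) x) \<le> (\<lambda>(m, n). ip_norm ip (s m - s n)) x"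
      using s by (intro always_eventually) (auto simp: dist_real_def ip_norm_reverse_triangle)
  qed (use assms(2) ip_Cauchy_def in blast)
  then show ?thesis by (simp add: Cauchy_convergent_iff)
qed

lemma ip_Cauchy_inner_convergent:
  assumes s: "\<And>n. s n \<in> H" and t: "\<And>n. t n \<in> H" and "ip_Cauchy ip s" "ip_Cauchy ip t"
  shows "convergent (\<lambda>n. ip (s n) (t n))"
proof -
  have "convergent (\<lambda>n. ip_norm ip (s n + t n))" "convergent (\<lambda>n. ip_norm ip (s n - t n))"
    by (rule ip_Cauchy_norm_convergent[OF add_mem[OF s t] ip_Cauchy_add[OF assms]],
        rule ip_Cauchy_norm_convergent[OF diff_mem[OF s t] ip_Cauchy_diff[OF assms]])
  then obtain a b where "(\<lambda>n. ip_norm ip (s n + t n)) \<longlonglongrightarrow> a" "(\<lambda>n. ip_norm ip (s n - t n)) \<longlonglongrightarrow> b"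
    by (auto simp: convergent_def)
  then have "(\<lambda>n. ((ip_norm ip (s n + t n))\<^sup>2 - (ip_norm ip (s n - t n))\<^sup>2) / 4) \<longlonglongrightarrow> (a\<^sup>2 - b\<^sup>2) / 4"
    by (auto intro!: tendsto_intros)
  moreover have "((ip_norm ip (s n + t n))\<^sup>2 - (ip_norm ip (s n - t n))\<^sup>2) / 4 = ip (s n) (t n)" for n
    using ip_polarization[OF s t] ip_nonneg[OF add_mem[OF s t]] ip_nonneg[OF diff_mem[OF s t]]
    by (simp add: ip_norm_def)
  ultimately show ?thesis by (auto simp: convergent_def)
qed

lemma ip_Cauchy_if_close:
  assumes X: "\<And>n. X n \<in> H" and d: "\<And>n. d n \<in> H" and "ip_Cauchy ip X"
    and close: "(\<lambda>k. ip_norm ip (X k - d k)) \<longlonglongrightarrow> 0"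
  shows "ip_Cauchy ip d"
  unfolding ip_Cauchy_def
proof (rule Lim_null_comparison)
  have "((\<lambda>(k, l). ip_norm ip (X k - d k) + ip_norm ip (X k - X l) + ip_norm ip (X l - d l))
      \<longlongrightarrow> 0 + 0 + 0) (sequentially \<times>\<^sub>F sequentially)"
    using \<open>ip_Cauchy ip X\<close>[unfolded ip_Cauchy_def]
      filterlim_compose[OF close filterlim_fst[of sequentially sequentially]]
      filterlim_compose[OF close filterlim_snd[of sequentially sequentially]]
    by (simp add: split_beta' tendsto_add_zero)
  then show "((\<lambda>(k, l). ip_norm ip (X k - d k) + ip_norm ip (X k - X l) + ip_norm ip (X l - d l))
      \<longlongrightarrow> 0) (sequentially \<times>\<^sub>F sequentially)" by simp
  have "ip_norm ip (d k - d l) \<le> ip_norm ip (X k - d k) + ip_norm ip (X k - X l) + ip_norm ip (X l - d l)"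
    for k l
    using ip_norm_diff_triangle[OF d[of k] X[of k] d[of l]]
      ip_norm_diff_triangle[OF X[of k] X[of l] d[of l]] ip_norm_diff_commute[OF X[of k] d[of k]]
    by linarith
  then show "\<forall>\<^sub>F x in sequentially \<times>\<^sub>F sequentially.
      norm ((\<lambda>(k, l). ip_norm ip (d k - d l)) x)
        \<le> (\<lambda>(k, l). ip_norm ip (X k - d k) + ip_norm ip (X k - X l) + ip_norm ip (X l - d l)) x"
    using d by (intro always_eventually) (auto simp: ip_norm_nonneg diff_mem)
qed

lemma complete_if_dense_subset_complete:
  assumes "D \<subseteq> H"
    and dense: "\<And>f e. f \<in> H \<Longrightarrow> e > 0 \<Longrightarrow> \<exists>d\<in>D. ip_norm ip (f - d) < e"
    and D_complete: "\<And>Y. (\<And>n. Y n \<in> D) \<Longrightarrow> ip_Cauchy ip Y \<Longrightarrow>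
                       \<exists>L\<in>H. (\<lambda>n. ip_norm ip (Y n - L)) \<longlonglongrightarrow> 0"
    and X: "\<And>n. X n \<in> H" and "ip_Cauchy ip X"
  shows "\<exists>L\<in>H. (\<lambda>n. ip_norm ip (X n - L)) \<longlonglongrightarrow> 0"
proof -
  have "\<exists>d. d \<in> D \<and> ip_norm ip (X k - d) < inverse (Suc k)" for k
    using dense[OF X[of k], of "inverse (real (Suc k))"] by auto
  then obtain d where d: "\<And>k. d k \<in> D" and close: "\<And>k. ip_norm ip (X k - d k) < inverse (Suc k)"
    by metis
  have dH: "d k \<in> H" for k using d \<open>D \<subseteq> H\<close> by blast
  have close_lim: "(\<lambda>k. ip_norm ip (X k - d k)) \<longlonglongrightarrow> 0"
    using close X dH
    by (intro Lim_null_comparison[OF _ LIMSEQ_inverse_real_of_nat] always_eventually)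
       (auto simp: ip_norm_nonneg diff_mem less_imp_le)
  obtain L where L: "L \<in> H" and lim: "(\<lambda>n. ip_norm ip (d n - L)) \<longlonglongrightarrow> 0"
    using D_complete[of d, OF d ip_Cauchy_if_close[OF X dH \<open>ip_Cauchy ip X\<close> close_lim]] by blast
  have "(\<lambda>n. ip_norm ip (X n - L)) \<longlonglongrightarrow> 0"
  proof (rule Lim_null_comparison)
    show "(\<lambda>n. ip_norm ip (X n - d n) + ip_norm ip (d n - L)) \<longlonglongrightarrow> 0"
      using tendsto_add[OF close_lim lim] by simp
    show "\<forall>\<^sub>F n in sequentially. norm (ip_norm ip (X n - L)) \<le> ip_norm ip (X n - d n) + ip_norm ip (d n - L)"
      using X dH L by (intro always_eventually) (simp add: ip_norm_nonneg diff_mem ip_norm_diff_triangle)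
  qed
  with L show ?thesis by blast
qed

end

lemma hilbert_space_onI:
  assumes "semi_inner_product_space H ip"
    and definite: "\<And>f. f \<in> H \<Longrightarrow> ip f f = 0 \<Longrightarrow> f = 0"
    and complete: "\<And>X. (\<And>n. X n \<in> H) \<Longrightarrow> ip_Cauchy ip X \<Longrightarrow>
                     \<exists>L\<in>H. (\<lambda>n. ip_norm ip (X n - L)) \<longlonglongrightarrow> 0"
  shows "hilbert_space_on H ip"
proof -
  interpret semi_inner_product_space H ip by fact
  have [simp]: "(\<lambda>i. f i + g i) = f + g" "(\<lambda>i. f i - g i) = f - g" "(\<lambda>_. 0) = 0"
    for f g :: "'a \<Rightarrow> real"
    by (simp_all add: fun_eq_iff)
  show ?thesis
    unfolding hilbert_space_on_def
  proof (intro conjI ballI allI impI)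
    fix X :: "nat \<Rightarrow> 'a \<Rightarrow> real"
    assume "(\<forall>n. X n \<in> H) \<and>
      (\<forall>e>0. \<exists>N. \<forall>m\<ge>N. \<forall>n\<ge>N. sqrt (ip (\<lambda>i. X m i - X n i) (\<lambda>i. X m i - X n i)) < e)"
    then show "\<exists>L\<in>H. (\<lambda>n. sqrt (ip (\<lambda>i. X n i - L i) (\<lambda>i. X n i - L i))) \<longlonglongrightarrow> 0"
      using complete[of X] ip_Cauchy_iff[of X] by (simp add: ip_norm_def)
  qed (auto simp: zero_mem add_mem scale_mem ip_add_left ip_scale_left ip_nonneg definite intro: ip_sym)
qed

section \<open>The reproducing kernel Hilbert space of a positive semidefinite kernel\<close>

definition comb_pair :: "(real \<times> 'a) list \<Rightarrow> ('a \<Rightarrow> real) \<Rightarrow> real" where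
  "comb_pair c f = (\<Sum>p\<leftarrow>c. fst p * f (snd p))"

definition scale_comb :: "real \<Rightarrow> (real \<times> 'a) list \<Rightarrow> (real \<times> 'a) list" where
  "scale_comb r c = map (\<lambda>(a, x). (r * a, x)) c"

lemma comb_pair_Nil [simp]: "comb_pair [] f = 0"
  and comb_pair_Cons [simp]: "comb_pair (p # c) f = fst p * f (snd p) + comb_pair c f"
  and comb_pair_append [simp]: "comb_pair (c @ d) f = comb_pair c f + comb_pair d f"
  by (simp_all add: comb_pair_def)

lemma comb_pair_scale_comb [simp]: "comb_pair (scale_comb r c) f = r * comb_pair c f"
  by (induction c) (auto simp: scale_comb_def algebra_simps)

lemma comb_pair_zero [simp]: "comb_pair c 0 = 0"
  by (induction c) simp_all

lemma comb_pair_add: "comb_pair c (f + g) = comb_pair c f + comb_pair c g"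
  by (induction c) (simp_all add: algebra_simps)

lemma comb_pair_scale: "comb_pair c (\<lambda>x. r * f x) = r * comb_pair c f"
  by (induction c) (simp_all add: algebra_simps)

lemma comb_pair_tendsto:
  "(\<And>x. (\<lambda>n. f n x) \<longlonglongrightarrow> g x) \<Longrightarrow> (\<lambda>n. comb_pair c (f n)) \<longlonglongrightarrow> comb_pair c g"
  by (induction c) (auto intro!: tendsto_intros)

locale psd_kernel =
  fixes K :: "'a \<Rightarrow> 'a \<Rightarrow> real"
  assumes kernel_sym: "K x y = K y x"
    and kernel_psd: "0 \<le> (\<Sum>i<(n::nat). \<Sum>j<n. a i * a j * K (v i) (v j))"
begin

definition kernel_comb :: "(real \<times> 'a) list \<Rightarrow> 'a \<Rightarrow> real" where
  "kernel_comb c = (\<lambda>y. comb_pair c (\<lambda>x. K x y))"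

lemma kernel_comb_Nil: "kernel_comb [] = 0"
  by (simp add: kernel_comb_def fun_eq_iff)

lemma kernel_comb_Cons: "kernel_comb (p # c) = (\<lambda>y. fst p * K (snd p) y) + kernel_comb c"
  by (simp add: kernel_comb_def fun_eq_iff)

lemma kernel_comb_append: "kernel_comb (c @ d) = kernel_comb c + kernel_comb d"
  by (simp add: kernel_comb_def fun_eq_iff)

lemma kernel_comb_scale: "kernel_comb (scale_comb r c) = (\<lambda>y. r * kernel_comb c y)"
  by (simp add: kernel_comb_def)

lemma kernel_comb_single: "kernel_comb [(1, x)] = K x"
  by (simp add: kernel_comb_def fun_eq_iff kernel_sym)

lemma comb_pair_kernel_comb_swap: "comb_pair c (kernel_comb d) = comb_pair d (kernel_comb c)"
proof (induction c)
  case (Cons p c)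
  have "kernel_comb d (snd p) = comb_pair d (K (snd p))"
    by (simp add: kernel_comb_def kernel_sym)
  moreover have "comb_pair d (kernel_comb (p # c)) =
      fst p * comb_pair d (K (snd p)) + comb_pair d (kernel_comb c)"
    unfolding kernel_comb_Cons comb_pair_add comb_pair_scale ..
  ultimately show ?case using Cons by simp
qed (simp add: kernel_comb_Nil comb_pair_def)

lemma comb_pair_kernel_comb_nonneg: "0 \<le> comb_pair c (kernel_comb c)"
proof -
  have "comb_pair c (kernel_comb c) =
      (\<Sum>i<length c. \<Sum>j<length c. fst (c ! i) * fst (c ! j) * K (snd (c ! i)) (snd (c ! j)))"
    by (simp add: comb_pair_def kernel_comb_def sum_list_sum_nth atLeast0LessThan
        sum_distrib_left algebra_simps kernel_sym)
  then show ?thesis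
    using kernel_psd[of "\<lambda>i. fst (c ! i)" "\<lambda>i. snd (c ! i)" "length c"] by simp
qed

definition pre_space :: "('a \<Rightarrow> real) set" where
  "pre_space = range kernel_comb"

text \<open>The choice of representative is irrelevant on \<open>pre_space\<close>: by symmetry of \<open>K\<close>,
  \<open>comb_pair c g\<close> only depends on \<open>kernel_comb c\<close> when \<open>g\<close> is itself a kernel combination.\<close>

definition pre_inner :: "('a \<Rightarrow> real) \<Rightarrow> ('a \<Rightarrow> real) \<Rightarrow> real" where
  "pre_inner f g = comb_pair (SOME c. kernel_comb c = f) g"

lemma kernel_mem_pre_space: "K x \<in> pre_space"
  using kernel_comb_single[of x] unfolding pre_space_def by (metis rangeI)

lemma pre_inner_kernel_comb: "g \<in> pre_space \<Longrightarrow> pre_inner (kernel_comb c) g = comb_pair c g"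
proof -
  assume "g \<in> pre_space"
  then obtain d where g: "g = kernel_comb d" by (auto simp: pre_space_def)
  define c' where "c' = (SOME c'. kernel_comb c' = kernel_comb c)"
  have "kernel_comb c' = kernel_comb c"
    unfolding c'_def by (rule someI_ex) blast
  then have "comb_pair c' g = comb_pair c g"
    unfolding g by (metis comb_pair_kernel_comb_swap)
  then show ?thesis by (simp add: pre_inner_def c'_def)
qed

lemma pre_inner_reproducing: "f \<in> pre_space \<Longrightarrow> pre_inner f (K y) = f y"
proof -
  assume "f \<in> pre_space"
  then obtain c where f: "f = kernel_comb c" by (auto simp: pre_space_def)
  have "pre_inner f (K y) = comb_pair c (K y)"
    unfolding f by (rule pre_inner_kernel_comb[OF kernel_mem_pre_space])
  also have "\<dots> = kernel_comb c y"
    unfolding kernel_comb_def comb_pair_def by (metis kernel_sym)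
  finally show ?thesis unfolding f .
qed

lemma pre_inner_tendsto:
  "(\<And>x. (\<lambda>n. g n x) \<longlonglongrightarrow> h x) \<Longrightarrow> (\<lambda>n. pre_inner f (g n)) \<longlonglongrightarrow> pre_inner f h"
  unfolding pre_inner_def by (rule comb_pair_tendsto)

sublocale pre: semi_inner_product_space pre_space pre_inner
proof
  show "0 \<in> pre_space" using kernel_comb_Nil by (metis pre_space_def rangeI)
  show "f + g \<in> pre_space" if "f \<in> pre_space" "g \<in> pre_space" for f g
    using that by (auto simp: pre_space_def kernel_comb_append[symmetric])
  show "(\<lambda>x. r * f x) \<in> pre_space" if "f \<in> pre_space" for f r
    using that by (auto simp: pre_space_def kernel_comb_scale[symmetric])
  show "pre_inner f g = pre_inner g f" if "f \<in> pre_space" "g \<in> pre_space" for f g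
    using that by (auto simp: pre_space_def pre_inner_kernel_comb comb_pair_kernel_comb_swap)
  show "pre_inner (f + g) h = pre_inner f h + pre_inner g h"
    if "f \<in> pre_space" "g \<in> pre_space" "h \<in> pre_space" for f g h
    using that by (auto simp: pre_space_def pre_inner_kernel_comb kernel_comb_append[symmetric])
  show "pre_inner (\<lambda>x. r * f x) g = r * pre_inner f g" if "f \<in> pre_space" "g \<in> pre_space" for f g r
    using that by (auto simp: pre_space_def pre_inner_kernel_comb kernel_comb_scale[symmetric])
  show "0 \<le> pre_inner f f" if "f \<in> pre_space" for f
    using that by (auto simp: pre_space_def pre_inner_kernel_comb comb_pair_kernel_comb_nonneg)
qed

lemma pre_space_eval_bound:
  "f \<in> pre_space \<Longrightarrow> \<bar>f y\<bar> \<le> ip_norm pre_inner f * sqrt (K y y)"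
  using pre.ip_Cauchy_Schwarz[OF _ kernel_mem_pre_space, of f y]
  by (simp add: pre_inner_reproducing kernel_mem_pre_space ip_norm_def)

definition approximates :: "(nat \<Rightarrow> 'a \<Rightarrow> real) \<Rightarrow> ('a \<Rightarrow> real) \<Rightarrow> bool" where
  "approximates s f \<longleftrightarrow>
     (\<forall>n. s n \<in> pre_space) \<and> ip_Cauchy pre_inner s \<and> (\<forall>y. (\<lambda>n. s n y) \<longlonglongrightarrow> f y)"

definition rkhs :: "('a \<Rightarrow> real) set" where
  "rkhs = {f. \<exists>s. approximates s f}"

definition rkhs_inner :: "('a \<Rightarrow> real) \<Rightarrow> ('a \<Rightarrow> real) \<Rightarrow> real" where
  "rkhs_inner f g =
     lim (\<lambda>n. pre_inner ((SOME s. approximates s f) n) ((SOME s. approximates s g) n))"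

lemma approximates_lim:
  assumes s: "\<And>n. s n \<in> pre_space" and "ip_Cauchy pre_inner s"
  shows "approximates s (\<lambda>y. lim (\<lambda>n. s n y))"
proof -
  have "Cauchy (\<lambda>n. s n y)" for y
    unfolding Cauchy_iff_dist_tendsto_0
  proof (rule Lim_null_comparison)
    show "((\<lambda>(m, n). ip_norm pre_inner (s m - s n) * sqrt (K y y)) \<longlongrightarrow> 0)
        (sequentially \<times>\<^sub>F sequentially)"
      using tendsto_mult_left_zero[OF \<open>ip_Cauchy pre_inner s\<close>[unfolded ip_Cauchy_def]]
      by (simp add: split_beta')
    show "\<forall>\<^sub>F x in sequentially \<times>\<^sub>F sequentially. norm ((\<lambda>(m, n). dist (s m y) (s n y)) x)
        \<le> (\<lambda>(m, n). ip_norm pre_inner (s m - s n) * sqrt (K y y)) x"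
      using pre_space_eval_bound[OF pre.diff_mem[OF s s]]
      by (intro always_eventually) (auto simp: dist_real_def)
  qed
  then show ?thesis
    using assms by (simp add: approximates_def Cauchy_convergent_iff convergent_LIMSEQ_iff)
qed

lemma approximates_const: "f \<in> pre_space \<Longrightarrow> approximates (\<lambda>_. f) f"
  by (simp add: approximates_def pre.ip_Cauchy_const)

lemma approximates_add:
  "approximates s f \<Longrightarrow> approximates t g \<Longrightarrow> approximates (\<lambda>n. s n + t n) (f + g)"
  unfolding approximates_def by (auto intro: pre.add_mem pre.ip_Cauchy_add tendsto_add)

lemma approximates_scale:
  "approximates s f \<Longrightarrow> approximates (\<lambda>n x. r * s n x) (\<lambda>x. r * f x)"
  unfolding approximates_def by (auto intro: pre.scale_mem pre.ip_Cauchy_scale tendsto_mult_left)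

lemma approximates_diff:
  "approximates s f \<Longrightarrow> approximates t g \<Longrightarrow> approximates (\<lambda>n. s n - t n) (f - g)"
  unfolding approximates_def by (auto intro: pre.diff_mem pre.ip_Cauchy_diff tendsto_diff)

lemma approximates_norm_bounded:
  assumes "approximates s f"
  obtains M where "\<And>n. ip_norm pre_inner (s n) \<le> M"
proof -
  have "Bseq (\<lambda>n. ip_norm pre_inner (s n))"
    using assms unfolding approximates_def
    by (intro convergent_imp_Bseq pre.ip_Cauchy_norm_convergent) auto
  then obtain M where "\<forall>n. norm (ip_norm pre_inner (s n)) \<le> M" by (rule BseqE)
  then show ?thesis using that by (metis abs_le_D1 real_norm_def)
qed

lemma approximates_zero_inner_le:
  assumes "approximates d 0" and M: "\<And>n. ip_norm pre_inner (d n) \<le> M"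
    and N: "\<And>m n. m \<ge> N \<Longrightarrow> n \<ge> N \<Longrightarrow> ip_norm pre_inner (d m - d n) < e" and "n \<ge> N"
  shows "pre_inner (d n) (d n) \<le> M * e"
proof (rule LIMSEQ_le_const)
  have d: "\<And>n. d n \<in> pre_space" and d_lim: "\<And>y. (\<lambda>n. d n y) \<longlonglongrightarrow> 0"
    using assms(1) by (auto simp: approximates_def)
  have "M \<ge> 0" using M[of 0] pre.ip_norm_nonneg[OF d[of 0]] by linarith
  \<comment> \<open>\<open>pre_inner (d n)\<close> is a finite combination of point evaluations, hence continuous
      under pointwise convergence\<close>
  have "(\<lambda>m. M * e + pre_inner (d n) (d m)) \<longlonglongrightarrow> M * e + pre_inner (d n) 0"
    by (intro tendsto_add tendsto_const pre_inner_tendsto) (simp add: d_lim)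
  then show "(\<lambda>m. M * e + pre_inner (d n) (d m)) \<longlonglongrightarrow> M * e"
    by (simp add: pre_inner_def)
  have "pre_inner (d n) (d n) \<le> M * e + pre_inner (d n) (d m)" if "m \<ge> N" for m
  proof -
    have "pre_inner (d n) (d n - d m) \<le> ip_norm pre_inner (d n) * ip_norm pre_inner (d n - d m)"
      using pre.ip_Cauchy_Schwarz[OF d[of n] pre.diff_mem[OF d[of n] d[of m]]] by (simp add: abs_le_iff)
    also have "\<dots> \<le> M * e"
      using M[of n] N[OF \<open>n \<ge> N\<close> \<open>m \<ge> N\<close>] \<open>M \<ge> 0\<close>
      by (intro mult_mono) (auto intro: pre.ip_norm_nonneg pre.diff_mem d)
    finally show ?thesis
      using d by (simp add: pre.ip_diff_right)
  qed
  then show "\<exists>N. \<forall>m\<ge>N. pre_inner (d n) (d n) \<le> M * e + pre_inner (d n) (d m)"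
    by blast
qed

lemma approximates_zero_norm_tendsto:
  assumes "approximates d 0"
  shows "(\<lambda>n. ip_norm pre_inner (d n)) \<longlonglongrightarrow> 0"
proof -
  have d: "\<And>n. d n \<in> pre_space" and "ip_Cauchy pre_inner d"
    using assms by (auto simp: approximates_def)
  obtain M where M: "\<And>n. ip_norm pre_inner (d n) \<le> M"
    using approximates_norm_bounded[OF assms] by blast
  have "M \<ge> 0" using M[of 0] pre.ip_norm_nonneg[OF d[of 0]] by linarith
  have "(\<lambda>n. pre_inner (d n) (d n)) \<longlonglongrightarrow> 0"
  proof (rule LIMSEQ_I)
    fix r :: real assume "r > 0"
    then have "r / (M + 1) > 0" using \<open>M \<ge> 0\<close> by simp
    moreover have "\<forall>e>0. \<exists>N. \<forall>m\<ge>N. \<forall>n\<ge>N. ip_norm pre_inner (d m - d n) < e"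
      using \<open>ip_Cauchy pre_inner d\<close> by (simp add: pre.ip_Cauchy_iff[OF d])
    ultimately obtain N
      where N: "\<And>m n. m \<ge> N \<Longrightarrow> n \<ge> N \<Longrightarrow> ip_norm pre_inner (d m - d n) < r / (M + 1)"
      by blast
    have "M * (r / (M + 1)) < r"
      using \<open>r > 0\<close> \<open>M \<ge> 0\<close> by (simp add: field_simps)
    then have "norm (pre_inner (d n) (d n) - 0) < r" if "n \<ge> N" for n
      using approximates_zero_inner_le[OF assms M N that] pre.ip_nonneg[OF d[of n]] by simp
    then show "\<exists>N. \<forall>n\<ge>N. norm (pre_inner (d n) (d n) - 0) < r" by blast
  qed
  from tendsto_real_sqrt[OF this] show ?thesis
    by (simp add: ip_norm_def)
qed

lemma approximates_same_limit:
  assumes "approximates s f" "approximates t f"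
  shows "(\<lambda>n. ip_norm pre_inner (s n - t n)) \<longlonglongrightarrow> 0"
  using approximates_zero_norm_tendsto approximates_diff[OF assms] by simp

lemma approximates_inner_diff_tendsto:
  assumes s: "approximates s f" "approximates s' f" and t: "approximates t g" "approximates t' g"
  shows "(\<lambda>n. pre_inner (s n) (t n) - pre_inner (s' n) (t' n)) \<longlonglongrightarrow> 0"
proof (rule Lim_null_comparison)
  have mem: "s n \<in> pre_space" "s' n \<in> pre_space" "t n \<in> pre_space" "t' n \<in> pre_space" for n
    using s t by (auto simp: approximates_def)
  have "convergent (\<lambda>n. ip_norm pre_inner (t n))" "convergent (\<lambda>n. ip_norm pre_inner (s' n))"
    using t s unfolding approximates_def by (auto intro: pre.ip_Cauchy_norm_convergent)
  then obtain a b where a: "(\<lambda>n. ip_norm pre_inner (t n)) \<longlonglongrightarrow> a"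
    and b: "(\<lambda>n. ip_norm pre_inner (s' n)) \<longlonglongrightarrow> b"
    by (auto simp: convergent_def)
  show "(\<lambda>n. ip_norm pre_inner (s n - s' n) * ip_norm pre_inner (t n)
      + ip_norm pre_inner (s' n) * ip_norm pre_inner (t n - t' n)) \<longlonglongrightarrow> 0"
    using tendsto_add[OF tendsto_mult[OF approximates_same_limit[OF s] a]
        tendsto_mult[OF b approximates_same_limit[OF t]]]
    by simp
  have "\<bar>pre_inner (s n) (t n) - pre_inner (s' n) (t' n)\<bar>
      \<le> ip_norm pre_inner (s n - s' n) * ip_norm pre_inner (t n)
        + ip_norm pre_inner (s' n) * ip_norm pre_inner (t n - t' n)" for n
  proof -
    have "pre_inner (s n) (t n) - pre_inner (s' n) (t' n)
        = pre_inner (s n - s' n) (t n) + pre_inner (s' n) (t n - t' n)"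
      using mem by (simp add: pre.ip_diff_left pre.ip_diff_right)
    then show ?thesis
      using pre.ip_Cauchy_Schwarz[OF pre.diff_mem[OF mem(1,2)] mem(3), of n n n]
        pre.ip_Cauchy_Schwarz[OF mem(2) pre.diff_mem[OF mem(3,4)], of n n n]
        abs_triangle_ineq[of "pre_inner (s n - s' n) (t n)" "pre_inner (s' n) (t n - t' n)"]
      by linarith
  qed
  then show "\<forall>\<^sub>F n in sequentially. norm (pre_inner (s n) (t n) - pre_inner (s' n) (t' n))
      \<le> ip_norm pre_inner (s n - s' n) * ip_norm pre_inner (t n)
        + ip_norm pre_inner (s' n) * ip_norm pre_inner (t n - t' n)"
    by (intro always_eventually allI) simp
qed

lemma approximates_inner:
  assumes s: "approximates s f" and t: "approximates t g"
  shows "(\<lambda>n. pre_inner (s n) (t n)) \<longlonglongrightarrow> rkhs_inner f g"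
proof -
  define s' where "s' = (SOME s. approximates s f)"
  define t' where "t' = (SOME t. approximates t g)"
  have s': "approximates s' f"
    unfolding s'_def by (rule someI[where P="\<lambda>s. approximates s f", OF s])
  have t': "approximates t' g"
    unfolding t'_def by (rule someI[where P="\<lambda>t. approximates t g", OF t])
  have "convergent (\<lambda>n. pre_inner (s' n) (t' n))"
    using s' t' unfolding approximates_def by (intro pre.ip_Cauchy_inner_convergent) auto
  then have "(\<lambda>n. pre_inner (s' n) (t' n)) \<longlonglongrightarrow> rkhs_inner f g"
    by (simp add: rkhs_inner_def s'_def t'_def convergent_LIMSEQ_iff)
  from tendsto_add[OF approximates_inner_diff_tendsto[OF s s' t t'] this] show ?thesis
    by simp
qed

lemma rkhs_memI: "approximates s f \<Longrightarrow> f \<in> rkhs"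
  by (auto simp: rkhs_def)

lemma rkhs_memE:
  assumes "f \<in> rkhs" obtains s where "approximates s f"
  using assms by (auto simp: rkhs_def)

sublocale rkhs: semi_inner_product_space rkhs rkhs_inner
proof
  show "0 \<in> rkhs"
    using approximates_const[OF pre.zero_mem] by (rule rkhs_memI)
next
  fix f g h r
  assume "f \<in> rkhs" "g \<in> rkhs" "h \<in> rkhs"
  obtain s where s: "approximates s f" using \<open>f \<in> rkhs\<close> by (rule rkhs_memE)
  obtain t where t: "approximates t g" using \<open>g \<in> rkhs\<close> by (rule rkhs_memE)
  obtain u where u: "approximates u h" using \<open>h \<in> rkhs\<close> by (rule rkhs_memE)
  have mem: "s n \<in> pre_space" "t n \<in> pre_space" "u n \<in> pre_space" for n
    using s t u by (auto simp: approximates_def)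
  show "f + g \<in> rkhs"
    using approximates_add[OF s t] by (rule rkhs_memI)
  show "(\<lambda>x. r * f x) \<in> rkhs"
    using approximates_scale[OF s] by (rule rkhs_memI)
  show "rkhs_inner f g = rkhs_inner g f"
    using LIMSEQ_unique[OF approximates_inner[OF s t]] approximates_inner[OF t s]
    by (simp add: pre.ip_sym[OF mem(1,2)])
  show "rkhs_inner (f + g) h = rkhs_inner f h + rkhs_inner g h"
    using LIMSEQ_unique[OF approximates_inner[OF approximates_add[OF s t] u]]
      tendsto_add[OF approximates_inner[OF s u] approximates_inner[OF t u]]
    by (simp add: pre.ip_add_left[OF mem])
  show "rkhs_inner (\<lambda>x. r * f x) g = r * rkhs_inner f g"
    using LIMSEQ_unique[OF approximates_inner[OF approximates_scale[OF s] t]]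
      tendsto_mult_left[OF approximates_inner[OF s t]]
    by (simp add: pre.ip_scale_left[OF mem(1,2)])
  show "0 \<le> rkhs_inner f f"
    using approximates_inner[OF s s] by (rule LIMSEQ_le_const) (auto intro: pre.ip_nonneg mem)
qed

lemma rkhs_inner_pre_space: "f \<in> pre_space \<Longrightarrow> g \<in> pre_space \<Longrightarrow> rkhs_inner f g = pre_inner f g"
  by (rule LIMSEQ_unique[OF approximates_inner[OF approximates_const approximates_const] tendsto_const])

lemma pre_space_subset_rkhs: "pre_space \<subseteq> rkhs"
  using approximates_const rkhs_memI by blast

lemma rkhs_definite:
  assumes "f \<in> rkhs" "rkhs_inner f f = 0"
  shows "f = 0"
proof
  fix y
  obtain s where s: "approximates s f" using assms(1) by (rule rkhs_memE)
  have "(\<lambda>n. ip_norm pre_inner (s n)) \<longlonglongrightarrow> 0"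
    using tendsto_real_sqrt[OF approximates_inner[OF s s]] assms(2) by (simp add: ip_norm_def)
  then have "(\<lambda>n. ip_norm pre_inner (s n) * sqrt (K y y)) \<longlonglongrightarrow> 0"
    by (rule tendsto_mult_left_zero)
  moreover have "norm (s n y) \<le> ip_norm pre_inner (s n) * sqrt (K y y)" for n
    using s pre_space_eval_bound by (simp add: approximates_def)
  ultimately have "(\<lambda>n. s n y) \<longlonglongrightarrow> 0"
    by (intro Lim_null_comparison[of "\<lambda>n. s n y"] always_eventually allI)
  moreover have "(\<lambda>n. s n y) \<longlonglongrightarrow> f y" using s by (simp add: approximates_def)
  ultimately show "f y = 0 y" by (simp add: LIMSEQ_unique)
qed

lemma rkhs_norm_approximates:
  assumes s: "approximates s f"
  shows "(\<lambda>n. ip_norm rkhs_inner (s n - f)) \<longlonglongrightarrow> 0"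
proof (rule LIMSEQ_I)
  fix r :: real assume "r > 0"
  have mem: "s n \<in> pre_space" for n using s by (simp add: approximates_def)
  have f: "f \<in> rkhs" using s by (rule rkhs_memI)
  have dist_lim: "(\<lambda>m. ip_norm pre_inner (s n - s m)) \<longlonglongrightarrow> ip_norm rkhs_inner (s n - f)" for n
  proof -
    have "approximates (\<lambda>m. s n - s m) (s n - f)"
      by (rule approximates_diff[OF approximates_const[OF mem] s])
    from tendsto_real_sqrt[OF approximates_inner[OF this this]] show ?thesis
      by (simp add: ip_norm_def)
  qed
  have "\<forall>e>0. \<exists>N. \<forall>m\<ge>N. \<forall>n\<ge>N. ip_norm pre_inner (s m - s n) < e"
    using s by (simp add: approximates_def pre.ip_Cauchy_iff[OF mem])
  moreover have "r / 2 > 0" using \<open>r > 0\<close> by simp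
  ultimately obtain N where N: "\<And>m n. m \<ge> N \<Longrightarrow> n \<ge> N \<Longrightarrow> ip_norm pre_inner (s m - s n) < r / 2"
    by blast
  have "norm (ip_norm rkhs_inner (s n - f) - 0) < r" if "n \<ge> N" for n
  proof -
    have "ip_norm rkhs_inner (s n - f) \<le> r / 2"
      using dist_lim[of n] by (rule LIMSEQ_le_const2) (use N \<open>n \<ge> N\<close> in \<open>auto intro: less_imp_le\<close>)
    moreover have "0 \<le> ip_norm rkhs_inner (s n - f)"
      using mem pre_space_subset_rkhs f by (intro rkhs.ip_norm_nonneg rkhs.diff_mem) auto
    ultimately show ?thesis using \<open>r > 0\<close> by simp
  qed
  then show "\<exists>N. \<forall>n\<ge>N. norm (ip_norm rkhs_inner (s n - f) - 0) < r" by blast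
qed

lemma rkhs_complete:
  assumes "\<And>n. X n \<in> rkhs" "ip_Cauchy rkhs_inner X"
  shows "\<exists>L\<in>rkhs. (\<lambda>n. ip_norm rkhs_inner (X n - L)) \<longlonglongrightarrow> 0"
proof (rule rkhs.complete_if_dense_subset_complete[OF pre_space_subset_rkhs _ _ assms])
  fix f and e :: real
  assume "f \<in> rkhs" "e > 0"
  then obtain s where s: "approximates s f" by (blast elim: rkhs_memE)
  then obtain n where "norm (ip_norm rkhs_inner (s n - f) - 0) < e"
    using LIMSEQ_D[OF rkhs_norm_approximates \<open>e > 0\<close>] by blast
  then have "ip_norm rkhs_inner (s n - f) < e" by simp
  moreover have "s n \<in> pre_space" using s by (simp add: approximates_def)
  moreover have "ip_norm rkhs_inner (f - s n) = ip_norm rkhs_inner (s n - f)"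
    using \<open>f \<in> rkhs\<close> \<open>s n \<in> pre_space\<close> pre_space_subset_rkhs
    by (intro rkhs.ip_norm_diff_commute) auto
  ultimately show "\<exists>d\<in>pre_space. ip_norm rkhs_inner (f - d) < e" by (intro bexI[of _ "s n"]) simp_all
next
  fix Y assume Y: "\<And>n. Y n \<in> pre_space" and "ip_Cauchy rkhs_inner Y"
  moreover have "ip_norm rkhs_inner (Y m - Y n) = ip_norm pre_inner (Y m - Y n)" for m n
    by (simp add: ip_norm_def rkhs_inner_pre_space pre.diff_mem Y)
  ultimately have "ip_Cauchy pre_inner Y"
    by (simp add: ip_Cauchy_def)
  with Y have "approximates Y (\<lambda>y. lim (\<lambda>n. Y n y))"
    by (rule approximates_lim)
  then show "\<exists>L\<in>rkhs. (\<lambda>n. ip_norm rkhs_inner (Y n - L)) \<longlonglongrightarrow> 0"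
    using rkhs_memI rkhs_norm_approximates by blast
qed

theorem rkhs_hilbert_space: "hilbert_space_on rkhs rkhs_inner"
  by (rule hilbert_space_onI[OF rkhs.semi_inner_product_space_axioms rkhs_definite rkhs_complete])

lemma kernel_mem_rkhs: "K x \<in> rkhs"
  using kernel_mem_pre_space pre_space_subset_rkhs by blast

lemma rkhs_inner_kernel: "rkhs_inner (K x) (K y) = K x y"
  by (simp add: rkhs_inner_pre_space kernel_mem_pre_space pre_inner_reproducing)

end

section \<open>Gram kernels of bounded families on a product with Lebesgue measure\<close>

lemma psd_kernel_gram:
  fixes f :: "'i \<Rightarrow> 'x \<Rightarrow> real"
  assumes int: "\<And>i j. integrable M (\<lambda>x. f i x * f j x)"
  shows "psd_kernel (\<lambda>i j. \<integral>x. f i x * f j x \<partial>M)"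
proof
  fix i j show "(\<integral>x. f i x * f j x \<partial>M) = (\<integral>x. f j x * f i x \<partial>M)"
    by (simp add: mult.commute)
next
  fix n :: nat and a :: "nat \<Rightarrow> real" and v :: "nat \<Rightarrow> 'i"
  have "(\<Sum>i<n. \<Sum>j<n. a i * a j * (\<integral>x. f (v i) x * f (v j) x \<partial>M))
      = (\<integral>x. (\<Sum>i<n. \<Sum>j<n. a i * a j * (f (v i) x * f (v j) x)) \<partial>M)"
    using int by (simp add: integral_sum integrable_sum)
  also have "\<dots> = (\<integral>x. (\<Sum>i<n. a i * f (v i) x)\<^sup>2 \<partial>M)"
    by (simp add: power2_eq_square sum_product algebra_simps)
  also have "\<dots> \<ge> 0" by simp
  finally show "0 \<le> (\<Sum>i<n. \<Sum>j<n. a i * a j * (\<integral>x. f (v i) x * f (v j) x \<partial>M))" .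
qed

lemma integrable_indicator_times_bounded:
  fixes h :: "'x \<times> real \<Rightarrow> real"
  assumes "finite_measure M" and I: "I \<in> sets lborel" "emeasure lborel I < \<infinity>"
    and [measurable]: "h \<in> borel_measurable (M \<Otimes>\<^sub>M lborel)"
    and bound: "\<And>x t. x \<in> space M \<Longrightarrow> t \<in> I \<Longrightarrow> \<bar>h (x, t)\<bar> \<le> C"
  shows "integrable (M \<Otimes>\<^sub>M lborel) (\<lambda>(x, t). indicator I t * h (x, t))"
proof (rule integrableI_bounded_set[where A = "space M \<times> I" and B = C])
  interpret finite_measure M by fact
  have [measurable]: "I \<in> sets borel" using I by simp
  show "space M \<times> I \<in> sets (M \<Otimes>\<^sub>M lborel)" using I by simp
  show "(\<lambda>(x, t). indicator I t * h (x, t)) \<in> borel_measurable (M \<Otimes>\<^sub>M lborel)"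
    by measurable
  show "emeasure (M \<Otimes>\<^sub>M lborel) (space M \<times> I) < \<infinity>"
    using I by (simp add: lborel.emeasure_pair_measure_Times ennreal_mult_eq_top_iff less_top[symmetric])
  show "AE p in M \<Otimes>\<^sub>M lborel. p \<in> space M \<times> I \<longrightarrow> norm ((\<lambda>(x, t). indicator I t * h (x, t)) p) \<le> C"
    using bound by (auto simp: indicator_def)
  show "AE p in M \<Otimes>\<^sub>M lborel. p \<notin> space M \<times> I \<longrightarrow> (\<lambda>(x, t). indicator I t * h (x, t)) p = 0"
    by (auto simp: space_pair_measure indicator_def intro!: AE_I2)
qed

lemma set_integral_fst:
  fixes h :: "'x \<Rightarrow> real \<Rightarrow> real"
  assumes "sigma_finite_measure M"
    and "integrable (M \<Otimes>\<^sub>M lborel) (\<lambda>(x, t). indicator I t * h x t)"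
  shows "(\<integral>x. set_lebesgue_integral lborel I (h x) \<partial>M) = (\<integral>(x, t). indicator I t * h x t \<partial>(M \<Otimes>\<^sub>M lborel))"
proof -
  interpret pair_sigma_finite M lborel
    using assms(1) by (intro pair_sigma_finite.intro lborel.sigma_finite_measure_axioms)
  show ?thesis
    unfolding set_lebesgue_integral_def using integral_fst[OF assms(2)] by simp
qed

lemma psd_kernel_iterated_set_integral:
  fixes h :: "'i \<Rightarrow> 'x \<Rightarrow> real \<Rightarrow> real"
  assumes M: "finite_measure M" and I: "I \<in> sets lborel" "emeasure lborel I < \<infinity>"
    and meas: "\<And>i. (\<lambda>(x, t). h i x t) \<in> borel_measurable (M \<Otimes>\<^sub>M lborel)"
    and bounded: "\<And>i. \<exists>C. \<forall>x\<in>space M. \<forall>t\<in>I. \<bar>h i x t\<bar> \<le> C"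
  shows "psd_kernel (\<lambda>i j. \<integral>x. set_lebesgue_integral lborel I (\<lambda>t. h i x t * h j x t) \<partial>M)"
proof -
  define F where "F i = (\<lambda>(x, t). indicator I t * h i x t)" for i
  have int: "integrable (M \<Otimes>\<^sub>M lborel) (\<lambda>(x, t). indicator I t * (h i x t * h j x t))" for i j
  proof -
    obtain Ci Cj where Ci: "\<forall>x\<in>space M. \<forall>t\<in>I. \<bar>h i x t\<bar> \<le> Ci"
      and Cj: "\<forall>x\<in>space M. \<forall>t\<in>I. \<bar>h j x t\<bar> \<le> Cj"
      using bounded by blast
    have "(\<lambda>(x, t). h i x t * h j x t) = (\<lambda>p. (\<lambda>(x, t). h i x t) p * (\<lambda>(x, t). h j x t) p)"
      by auto
    then have "(\<lambda>(x, t). h i x t * h j x t) \<in> borel_measurable (M \<Otimes>\<^sub>M lborel)"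
      using borel_measurable_times[OF meas meas] by simp
    moreover have "\<bar>h i x t * h j x t\<bar> \<le> Ci * Cj" if "x \<in> space M" "t \<in> I" for x t
      unfolding abs_mult using Ci Cj that by (intro mult_mono) (auto intro: order_trans[OF abs_ge_zero])
    ultimately show ?thesis
      using integrable_indicator_times_bounded[OF M I, of "\<lambda>(x, t). h i x t * h j x t" "Ci * Cj"]
      by simp
  qed
  have F_mult: "(\<lambda>p. F i p * F j p) = (\<lambda>(x, t). indicator I t * (h i x t * h j x t))" for i j
    by (auto simp: F_def indicator_def fun_eq_iff)
  have "psd_kernel (\<lambda>i j. \<integral>p. F i p * F j p \<partial>(M \<Otimes>\<^sub>M lborel))"
    using int by (intro psd_kernel_gram) (simp add: F_mult)
  moreover have "(\<integral>p. F i p * F j p \<partial>(M \<Otimes>\<^sub>M lborel))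
      = (\<integral>x. set_lebesgue_integral lborel I (\<lambda>t. h i x t * h j x t) \<partial>M)" for i j
    using set_integral_fst[OF finite_measure.sigma_finite_measure[OF M] int[of i j]]
    by (simp add: F_mult)
  ultimately show ?thesis by simp
qed

section \<open>Boundedness of STL robustness and the kernel \<open>k'\<close>\<close>

lemma abs_cSUP_le:
  fixes f :: "'a \<Rightarrow> real"
  assumes "S \<noteq> {}" and bound: "\<And>x. x \<in> S \<Longrightarrow> \<bar>f x\<bar> \<le> C"
  shows "\<bar>SUP x\<in>S. f x\<bar> \<le> C"
proof -
  obtain x0 where "x0 \<in> S" using \<open>S \<noteq> {}\<close> by blast
  have "bdd_above (f ` S)"
    using bound by (intro bdd_aboveI2[of _ _ C]) (auto simp: abs_le_iff)
  then have "f x0 \<le> (SUP x\<in>S. f x)" using \<open>x0 \<in> S\<close> by (rule cSUP_upper2) simp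
  moreover have "(SUP x\<in>S. f x) \<le> C"
    using \<open>S \<noteq> {}\<close> bound by (intro cSUP_least) (auto simp: abs_le_iff)
  ultimately show ?thesis using bound[OF \<open>x0 \<in> S\<close>] by (simp add: abs_le_iff)
qed

lemma abs_cINF_le:
  fixes f :: "'a \<Rightarrow> real"
  assumes "S \<noteq> {}" and "\<And>x. x \<in> S \<Longrightarrow> \<bar>f x\<bar> \<le> C"
  shows "\<bar>INF x\<in>S. f x\<bar> \<le> C"
  using abs_cSUP_le[of S "\<lambda>x. - f x" C] assms by (simp add: Inf_real_def image_image)

lemma rho_bounded:
  fixes T :: "(real \<Rightarrow> real^'n::finite) set"
  assumes traj_bounded: "\<forall>\<xi>\<in>T. \<forall>t\<ge>0. norm (\<xi> t) \<le> B" and "wf_stl \<phi>"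
  shows "\<exists>C. \<forall>\<xi>\<in>T. \<forall>t\<ge>0. \<bar>rho c \<phi> \<xi> t\<bar> \<le> C"
  using \<open>wf_stl \<phi>\<close>
proof (induction \<phi>)
  case TT
  then show ?case by auto
next
  case (Atom f)
  then have "continuous_on (cball 0 B) f"
    by (auto intro: continuous_on_subset)
  then have "bounded (f ` cball 0 B)"
    by (intro compact_imp_bounded compact_continuous_image compact_cball)
  then obtain C where "\<forall>y\<in>f ` cball 0 B. norm y \<le> C"
    by (auto simp: bounded_iff)
  then have "\<forall>\<xi>\<in>T. \<forall>t\<ge>0. \<bar>f (\<xi> t)\<bar> \<le> C"
    using traj_bounded by auto
  then show ?case by auto
next
  case (Neg \<phi>)
  then obtain C where "\<forall>\<xi>\<in>T. \<forall>t\<ge>0. \<bar>rho c \<phi> \<xi> t\<bar> \<le> C" by auto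
  then show ?case by auto
next
  case (And \<phi> \<psi>)
  then obtain C1 C2 where C1: "\<forall>\<xi>\<in>T. \<forall>t\<ge>0. \<bar>rho c \<phi> \<xi> t\<bar> \<le> C1"
    and C2: "\<forall>\<xi>\<in>T. \<forall>t\<ge>0. \<bar>rho c \<psi> \<xi> t\<bar> \<le> C2"
    by auto
  have "\<bar>rho c (And \<phi> \<psi>) \<xi> t\<bar> \<le> max C1 C2" if "\<xi> \<in> T" "t \<ge> 0" for \<xi> t
  proof -
    have "\<bar>rho c \<phi> \<xi> t\<bar> \<le> C1" "\<bar>rho c \<psi> \<xi> t\<bar> \<le> C2" using C1 C2 that by auto
    then show ?thesis by (simp add: abs_le_iff min_def max_def)
  qed
  then show ?case by blast
next
  case (Until a b \<phi> \<psi>)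
  then obtain C1 C2 where C1: "\<forall>\<xi>\<in>T. \<forall>t\<ge>0. \<bar>rho c \<phi> \<xi> t\<bar> \<le> C1"
    and C2: "\<forall>\<xi>\<in>T. \<forall>t\<ge>0. \<bar>rho c \<psi> \<xi> t\<bar> \<le> C2"
    by auto
  have ab: "0 \<le> real_of_rat a" "real_of_rat a < real_of_rat b"
    using Until.prems by (simp_all add: of_rat_less)
  have "\<bar>rho c (Until a b \<phi> \<psi>) \<xi> t\<bar> \<le> max C1 C2" if "\<xi> \<in> T" "t \<ge> 0" for \<xi> t
    unfolding rho.simps
  proof (rule abs_cSUP_le)
    show "{real_of_rat a + t..real_of_rat b + t} \<noteq> {}" using ab by simp
    fix t' assume t': "t' \<in> {real_of_rat a + t..real_of_rat b + t}"
    then have "real_of_rat a + t \<le> t'" by simp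
    with ab(1) have "t \<le> t'" by linarith
    have "\<bar>INF t''\<in>{t..t'}. rho c \<phi> \<xi> t''\<bar> \<le> C1"
      using \<open>t \<le> t'\<close> C1 that by (intro abs_cINF_le) auto
    moreover have "\<bar>rho c \<psi> \<xi> t'\<bar> \<le> C2" using C2 that \<open>t \<le> t'\<close> by auto
    ultimately show "\<bar>min (rho c \<psi> \<xi> t') (INF t''\<in>{t..t'}. rho c \<phi> \<xi> t'')\<bar> \<le> max C1 C2"
      by (simp add: abs_le_iff min_def max_def)
  qed
  then show ?case by blast
qed

text \<open>Robustness extended by zero to ill-formed formulae, so that the kernel built from it is
  positive semidefinite on the whole type of formulae.\<close>

definition wf_rho :: "real \<Rightarrow> ('n::finite) stl \<Rightarrow> (real \<Rightarrow> real^'n) \<Rightarrow> real \<Rightarrow> real" where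
  "wf_rho c \<phi> \<xi> t = (if wf_stl \<phi> then rho c \<phi> \<xi> t else 0)"

lemma wf_rho_bounded:
  fixes T :: "(real \<Rightarrow> real^'n::finite) set"
  assumes "\<forall>\<xi>\<in>T. \<forall>t\<ge>0. norm (\<xi> t) \<le> B"
  shows "\<exists>C. \<forall>\<xi>\<in>T. \<forall>t\<ge>0. \<bar>wf_rho c \<phi> \<xi> t\<bar> \<le> C"
  using rho_bounded[OF assms, of \<phi> c] by (cases "wf_stl \<phi>") (auto simp: wf_rho_def)

theorem theorem1:
  fixes T :: "(real \<Rightarrow> real^'n) set"
    and \<mu>0 :: "(real \<Rightarrow> real^'n) measure"
    and I :: "real set"
    and c :: real
  assumes "c > 0"
    and "\<forall>\<xi>\<in>T. continuous_on {0..} \<xi>"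
    and "\<exists>B. \<forall>\<xi>\<in>T. \<forall>t\<ge>0. norm (\<xi> t) \<le> B"
    and "is_interval I" and "bounded I" and "I \<subseteq> {0..}"
    and "prob_space \<mu>0" and "space \<mu>0 = T"
    and "\<forall>\<phi>. wf_stl \<phi> \<longrightarrow>
           (\<lambda>(\<xi>, t). rho c \<phi> \<xi> t) \<in> borel_measurable (\<mu>0 \<Otimes>\<^sub>M lborel)"
  shows "\<exists>(H :: ('n stl \<Rightarrow> real) set) ip (\<Phi> :: 'n stl \<Rightarrow> ('n stl \<Rightarrow> real)).
           hilbert_space_on H ip \<and>
           (\<forall>\<phi>. wf_stl \<phi> \<longrightarrow> \<Phi> \<phi> \<in> H) \<and>
           (\<forall>\<phi> \<psi>. wf_stl \<phi> \<longrightarrow> wf_stl \<psi> \<longrightarrow>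
              stl_kernel c I \<mu>0 \<phi> \<psi> = ip (\<Phi> \<phi>) (\<Phi> \<psi>))"
proof -
  obtain B where B: "\<forall>\<xi>\<in>T. \<forall>t\<ge>0. norm (\<xi> t) \<le> B" using assms(3) by blast
  define K where "K \<phi> \<psi> =
    (\<integral>\<xi>. set_lebesgue_integral lborel I (\<lambda>t. wf_rho c \<phi> \<xi> t * wf_rho c \<psi> \<xi> t) \<partial>\<mu>0)" for \<phi> \<psi>
  have "psd_kernel K"
    unfolding K_def
  proof (rule psd_kernel_iterated_set_integral)
    show "finite_measure \<mu>0" using assms(7) by (rule prob_space.axioms)
    show "I \<in> sets lborel" using real_interval_borel_measurable[OF assms(4)] by simp
    show "emeasure lborel I < \<infinity>" using assms(5) by (rule emeasure_bounded_finite)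
    show "(\<lambda>(\<xi>, t). wf_rho c \<phi> \<xi> t) \<in> borel_measurable (\<mu>0 \<Otimes>\<^sub>M lborel)" for \<phi>
      using assms(9) by (cases "wf_stl \<phi>") (simp_all add: wf_rho_def)
    show "\<exists>C. \<forall>\<xi>\<in>space \<mu>0. \<forall>t\<in>I. \<bar>wf_rho c \<phi> \<xi> t\<bar> \<le> C" for \<phi>
      using wf_rho_bounded[OF B, of c \<phi>] assms(6,8) by (force simp: subset_eq)
  qed
  then interpret psd_kernel K .
  have "stl_kernel c I \<mu>0 \<phi> \<psi> = rkhs_inner (K \<phi>) (K \<psi>)" if "wf_stl \<phi>" "wf_stl \<psi>" for \<phi> \<psi>
    using that by (simp add: rkhs_inner_kernel stl_kernel_def K_def wf_rho_def)
  then show ?thesis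
    using rkhs_hilbert_space kernel_mem_rkhs by blast
qed

end
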